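(* Let $a\ge b\ge2$ be integers with $a/b\in\mathbb Z$, $\beta>1$ the positive root of $\beta^2=a\beta+b$, and $\beta'=a-\beta$. Then for each $n\in\mathbb N$, \[ \inf_{j\in\mathbb Z}P_{\mathbf h(j)}(\beta')\in\Big\{\mu_n+(\beta')^{2n}\tfrac{b-1}{1-(\beta')^2}\,t:\ t\in[\beta',0]\Big\}, \qquad \mu_n=\min_{j\in\{0,1,\dots,b^n-1\}}P_{\mathrm{Pref}_{2n}(\mathbf h(j))}(\beta'). \]
   Context: For an algebraic integer $\beta$, the $\beta$-adic expansion of $x\in\mathbb Z[\beta]$ is the unique infinite word $\mathbf h(x)=u_0u_1u_2\cdots$ with $u_n\in\{0,1,\dots,|N(\beta)|-1\}$ such that $x-\sum_{i=0}^{n-1}u_i\beta^i\in\beta^n\mathbb Z[\beta]$ for all $n\in\mathbb N$; here $|N(\beta)|=b$. $\mathrm{Pref}_n(\mathbf u)$ denotes the prefix of length $n$ of an infinite word $\mathbf u$. For a finite word $w=w_0\cdots w_{k-1}$, $P_w(X)=\sum_{i=0}^{k-1}w_iX^i$; for an infinite word, $P_{\mathbf u}(X)=\sum_{i\ge0}u_iX^i$. *)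

theory Defs
  imports Complex_Main
begin

definition Zbeta :: "real \<Rightarrow> real set" where
  "Zbeta \<beta> = {\<Sum>i<k. of_int (c i) * \<beta> ^ i | c k. True}"

text \<open>beta-adic expansion of x with digits in {0,...,D-1} (D = |N(beta)|):
  the unique digit sequence u with x - sum_{i<n} u_i beta^i in beta^n Z[beta] for all n.\<close>
definition beta_expansion :: "real \<Rightarrow> nat \<Rightarrow> real \<Rightarrow> (nat \<Rightarrow> nat)" where
  "beta_expansion \<beta> D x = (THE u. (\<forall>n. u n < D) \<and>
      (\<forall>n. \<exists>z\<in>Zbeta \<beta>. x - (\<Sum>i<n. real (u i) * \<beta> ^ i) = \<beta> ^ n * z))"

definition P_pref :: "(nat \<Rightarrow> nat) \<Rightarrow> nat \<Rightarrow> real \<Rightarrow> real" where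
  "P_pref u k X = (\<Sum>i<k. real (u i) * X ^ i)"

definition P_inf :: "(nat \<Rightarrow> nat) \<Rightarrow> real \<Rightarrow> real" where
  "P_inf u X = (\<Sum>i. real (u i) * X ^ i)"

end

theory Submission
  imports Defs "HOL-Library.Product_Plus"
begin

text \<open>Write an element of Z[beta] as p + q beta. Its beta-adic digit is p mod b, and since
  b / beta = beta - a, removing that digit and dividing by beta leaves (q - a k) + k beta with
  k = p div b. Because b divides a, changing (p, q) by b^K (t, s) changes the state after two steps
  by b^(K-1) times an integer vector, so the first 2K digits stay fixed. Hence the first 2n digits
  of an integer j only depend on j mod b^n, and by correcting j with suitable multiples of b^n,
  b^(n+1), ... the even-indexed digits from position 2n on can be made 0 for as long as we like.
  As -1 < beta' < 0, a digit tail starting at position 2n contributes between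
  beta'^(2n) (b-1) beta' / (1 - beta'^2) and beta'^(2n) (b-1) / (1 - beta'^2), and the upper bound
  tends to 0 when the even tail digits vanish for long. So the infimum lies between
  mu_n + beta'^(2n) (b-1) beta' / (1 - beta'^2) and mu_n.\<close>

text \<open>A state (p, q) stands for p + q beta, where beta^2 = A beta + B.\<close>

definition beta_step :: "int \<Rightarrow> int \<Rightarrow> int \<times> int \<Rightarrow> int \<times> int" where
  "beta_step A B x = (snd x - A * (fst x div B), fst x div B)"

definition beta_digit :: "int \<Rightarrow> int \<Rightarrow> nat \<Rightarrow> int \<times> int \<Rightarrow> int" where
  "beta_digit A B i x = fst ((beta_step A B ^^ i) x) mod B"

text \<open>For A = B c, a perturbation B (t, s) of the state reappears after two steps as
  beta_carry A c (t, s).\<close>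

definition beta_carry :: "int \<Rightarrow> int \<Rightarrow> int \<times> int \<Rightarrow> int \<times> int" where
  "beta_carry A c x = (fst x + A * c * fst x - A * snd x, snd x - c * fst x)"

lemma beta_digit_shift: "beta_digit A B (i + m) x = beta_digit A B i ((beta_step A B ^^ m) x)"
  by (simp add: beta_digit_def funpow_add)

lemma beta_step_twice_perturb:
  assumes B: "B > 0" and A: "A = B * c"
  shows "(beta_step A B ^^ 2) (p + B * t, q + B * s)
           = (beta_step A B ^^ 2) (p, q) + beta_carry A c (t, s)"
    and "i < 2 \<Longrightarrow> beta_digit A B i (p + B * t, q + B * s) = beta_digit A B i (p, q)"
proof -
  define k where "k = p div B"
  define q' where "q' = q - A * k"
  have div1: "(p + B * t) div B = k + t"
    using B by (simp add: k_def)
  have rest1: "q + B * s - A * (k + t) = q' + B * (s - c * t)"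
    using A by (simp add: q'_def algebra_simps)
  have div2: "(q' + B * (s - c * t)) div B = q' div B + (s - c * t)"
    using B by simp
  have "(beta_step A B ^^ 2) (p, q) = (k - A * (q' div B), q' div B)"
    by (simp add: numeral_2_eq_2 beta_step_def k_def q'_def)
  moreover have "(beta_step A B ^^ 2) (p + B * t, q + B * s)
                   = (k + t - A * (q' div B + (s - c * t)), q' div B + (s - c * t))"
    by (simp add: numeral_2_eq_2 beta_step_def div1 rest1 div2)
  ultimately show "(beta_step A B ^^ 2) (p + B * t, q + B * s)
                     = (beta_step A B ^^ 2) (p, q) + beta_carry A c (t, s)"
    by (simp add: beta_carry_def A algebra_simps)
  assume "i < 2"
  then consider "i = 0" | "i = 1" by linarith
  then show "beta_digit A B i (p + B * t, q + B * s) = beta_digit A B i (p, q)"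
    by cases (simp_all add: beta_digit_def beta_step_def div1 rest1 flip: k_def q'_def)
qed

lemma beta_step_twice_perturb_power:
  assumes "B > 0" and "A = B * c"
  shows "(beta_step A B ^^ 2) (p + B ^ Suc K * t, q + B ^ Suc K * s)
           = (fst ((beta_step A B ^^ 2) (p, q)) + B ^ K * fst (beta_carry A c (t, s)),
              snd ((beta_step A B ^^ 2) (p, q)) + B ^ K * snd (beta_carry A c (t, s)))"
  using beta_step_twice_perturb(1)[OF assms, of p "B ^ K * t" q "B ^ K * s"]
  by (simp add: beta_carry_def prod_eq_iff algebra_simps)

lemma beta_steps_perturb:
  assumes "B > 0" and "A = B * c"
  shows "(beta_step A B ^^ (2 * K)) (p + B ^ K * t, q + B ^ K * s)
           = (beta_step A B ^^ (2 * K)) (p, q) + (beta_carry A c ^^ K) (t, s)"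
proof (induction K arbitrary: p q t s)
  case (Suc K)
  obtain p' q' where pq: "(beta_step A B ^^ 2) (p, q) = (p', q')"
    by fastforce
  obtain t' s' where ts: "beta_carry A c (t, s) = (t', s')"
    by fastforce
  have split: "(beta_step A B ^^ (2 * Suc K)) x = (beta_step A B ^^ (2 * K)) ((beta_step A B ^^ 2) x)" for x
    by (simp only: mult_Suc_right add.commute[of 2] funpow_add comp_apply)
  have "(beta_step A B ^^ (2 * Suc K)) (p + B ^ Suc K * t, q + B ^ Suc K * s)
          = (beta_step A B ^^ (2 * K)) (p' + B ^ K * t', q' + B ^ K * s')"
    unfolding split beta_step_twice_perturb_power[OF assms, of p K t q s, unfolded pq ts fst_conv snd_conv] ..
  also have "\<dots> = (beta_step A B ^^ (2 * K)) (p', q') + (beta_carry A c ^^ K) (t', s')"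
    by (rule Suc.IH)
  also have "\<dots> = (beta_step A B ^^ (2 * Suc K)) (p, q) + (beta_carry A c ^^ Suc K) (t, s)"
    unfolding split pq funpow_Suc_right comp_apply ts ..
  finally show ?case .
qed simp

lemma beta_digit_perturb:
  assumes "B > 0" and "A = B * c" and "i < 2 * K"
  shows "beta_digit A B i (p + B ^ K * t, q + B ^ K * s) = beta_digit A B i (p, q)"
  using assms(3)
proof (induction K arbitrary: i p q t s)
  case (Suc K)
  show ?case
  proof (cases "i < 2")
    case True
    then show ?thesis
      using beta_step_twice_perturb(2)[OF assms(1,2), of i p "B ^ K * t" q "B ^ K * s"]
      by (simp add: mult.assoc)
  next
    case False
    define i' where "i' = i - 2"
    have i: "i = i' + 2" and "i' < 2 * K"
      using False Suc.prems by (simp_all add: i'_def)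
    then show ?thesis
      unfolding i beta_digit_shift beta_step_twice_perturb_power[OF assms(1,2)]
      using Suc.IH[of i'] by simp
  qed
qed simp

lemma beta_carry_fst_mod:
  assumes "A = B * c"
  shows "fst ((beta_carry A c ^^ K) (t, s)) mod B = t mod B"
proof (induction K arbitrary: t s)
  case (Suc K)
  obtain t' s' where ts: "beta_carry A c (t, s) = (t', s')"
    by fastforce
  have "t' = t + B * (c * c * t - c * s)"
    using assms ts by (auto simp: beta_carry_def algebra_simps)
  moreover have "(beta_carry A c ^^ Suc K) (t, s) = (beta_carry A c ^^ K) (t', s')"
    by (simp only: funpow_Suc_right comp_apply ts)
  ultimately show ?case
    using Suc.IH[of t' s'] by simp
qed simp

lemma beta_digit_mod_power:
  assumes "B > 0" and "A = B * c" and "i < 2 * n"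
  shows "beta_digit A B i (j, 0) = beta_digit A B i (j mod B ^ n, 0)"
  using beta_digit_perturb[OF assms, of "j mod B ^ n" "j div B ^ n" 0 0] by simp

lemma exists_beta_digit_prefix_even_zeros:
  assumes "B > 0" and "A = B * c"
  shows "\<exists>j. (\<forall>i < 2 * n. beta_digit A B i (j, 0) = beta_digit A B i (r, 0)) \<and>
             (\<forall>i. 2 * n \<le> i \<and> i < 2 * n + 2 * N \<and> even i \<longrightarrow> beta_digit A B i (j, 0) = 0)"
proof (induction N)
  case 0
  show ?case
    by (intro exI[of _ r]) simp
next
  case (Suc N)
  then obtain j where prefix: "\<forall>i < 2 * n. beta_digit A B i (j, 0) = beta_digit A B i (r, 0)"
    and zeros: "\<forall>i. 2 * n \<le> i \<and> i < 2 * n + 2 * N \<and> even i \<longrightarrow> beta_digit A B i (j, 0) = 0"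
    by blast
  define K where "K = n + N"
  define f where "f = fst ((beta_step A B ^^ (2 * K)) (j, 0))"
  define j' where "j' = j + B ^ K * (- f)"
  have keep: "beta_digit A B i (j', 0) = beta_digit A B i (j, 0)" if "i < 2 * K" for i
    using beta_digit_perturb[OF assms that, of j "- f" 0 0] by (simp add: j'_def)
  have "beta_digit A B (2 * K) (j', 0) = (f + fst ((beta_carry A c ^^ K) (- f, 0))) mod B"
    using beta_steps_perturb[OF assms, of K j "- f" 0 0] by (simp add: beta_digit_def j'_def f_def)
  also have "\<dots> = (f + fst ((beta_carry A c ^^ K) (- f, 0)) mod B) mod B"
    by (simp add: mod_add_right_eq)
  also have "\<dots> = (f + (- f) mod B) mod B"
    by (simp only: beta_carry_fst_mod[OF assms(2)])
  finally have new_zero: "beta_digit A B (2 * K) (j', 0) = 0"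
    by (simp add: mod_add_right_eq)
  show ?case
  proof (intro exI[of _ j'] conjI allI impI)
    fix i assume "i < 2 * n"
    then show "beta_digit A B i (j', 0) = beta_digit A B i (r, 0)"
      using keep prefix by (simp add: K_def)
  next
    fix i assume i: "2 * n \<le> i \<and> i < 2 * n + 2 * Suc N \<and> even i"
    then obtain k where "i = 2 * k" and "n \<le> k" and "k \<le> n + N"
      by (auto elim!: evenE)
    then have "i < 2 * n + 2 * N \<or> i = 2 * K"
      unfolding K_def by auto
    then show "beta_digit A B i (j', 0) = 0"
    proof
      assume "i < 2 * n + 2 * N"
      then show ?thesis
        using i keep[of i] zeros by (simp add: K_def)
    qed (use new_zero in simp)
  qed
qed

lemma alternating_power_series_bounds:
  fixes u :: "nat \<Rightarrow> real" and x D :: real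
  assumes x: "-1 < x" "x < 0" and u: "\<And>i. 0 \<le> u i" "\<And>i. u i \<le> D"
  shows "summable (\<lambda>i. u i * x ^ i)"
    and "D * x / (1 - x\<^sup>2) \<le> (\<Sum>i. u i * x ^ i)"
    and "(\<Sum>i. u i * x ^ i) \<le> D / (1 - x\<^sup>2)"
proof -
  have geom: "(\<lambda>i. x ^ i) sums (1 / (1 - x))" "(\<lambda>i. \<bar>x\<bar> ^ i) sums (1 / (1 + x))"
    using geometric_sums[of x] geometric_sums[of "\<bar>x\<bar>"] x by simp_all
  show summable: "summable (\<lambda>i. u i * x ^ i)"
  proof (rule summable_comparison_test')
    show "summable (\<lambda>i. D * \<bar>x\<bar> ^ i)"
      using geom(2) by (intro summable_mult sums_summable)
    show "norm (u i * x ^ i) \<le> D * \<bar>x\<bar> ^ i" for i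
      using u[of i] by (simp add: abs_mult power_abs mult_right_mono)
  qed
  \<comment> \<open>Compare with D/2 (x^i - |x|^i) and D/2 (x^i + |x|^i): each is D x^i for one parity
    of i and 0 for the other.\<close>
  have parity: "(\<bar>x\<bar> ^ i = x ^ i \<and> 0 \<le> x ^ i) \<or> (\<bar>x\<bar> ^ i = - (x ^ i) \<and> x ^ i < 0)" for i
    using x by (cases "even i") (simp_all add: power_even_abs zero_le_even_power power_less_zero_eq
        flip: power_abs)
  have below_D: "D * x ^ i \<le> u i * x ^ i" if "x ^ i < 0" for i
    using u(2)[of i] that by (simp add: mult_right_mono_neg)
  have lower: "D / 2 * (x ^ i - \<bar>x\<bar> ^ i) \<le> u i * x ^ i" for i
    using parity[of i]
  proof
    assume "\<bar>x\<bar> ^ i = x ^ i \<and> 0 \<le> x ^ i"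
    then show ?thesis
      using u(1)[of i] by simp
  next
    assume "\<bar>x\<bar> ^ i = - (x ^ i) \<and> x ^ i < 0"
    then show ?thesis
      using below_D[of i] by simp
  qed
  have upper: "u i * x ^ i \<le> D / 2 * (x ^ i + \<bar>x\<bar> ^ i)" for i
    using parity[of i]
  proof
    assume "\<bar>x\<bar> ^ i = x ^ i \<and> 0 \<le> x ^ i"
    then show ?thesis
      using u(2)[of i] by (simp add: mult_right_mono)
  next
    assume neg: "\<bar>x\<bar> ^ i = - (x ^ i) \<and> x ^ i < 0"
    have "u i * x ^ i \<le> 0"
      by (intro mult_nonneg_nonpos u(1)) (use neg in linarith)
    then show ?thesis
      using neg by simp
  qed
  have "(\<lambda>i. D / 2 * (x ^ i - \<bar>x\<bar> ^ i)) sums (D / 2 * (1 / (1 - x) - 1 / (1 + x)))"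
    by (intro sums_mult sums_diff geom)
  moreover have "D / 2 * (1 / (1 - x) - 1 / (1 + x)) = D * x / (1 - x\<^sup>2)"
    using x by (simp add: field_simps power2_eq_square)
  ultimately show "D * x / (1 - x\<^sup>2) \<le> (\<Sum>i. u i * x ^ i)"
    using suminf_le[OF lower _ summable] by (metis sums_summable sums_unique)
  have "(\<lambda>i. D / 2 * (x ^ i + \<bar>x\<bar> ^ i)) sums (D / 2 * (1 / (1 - x) + 1 / (1 + x)))"
    by (intro sums_mult sums_add geom)
  moreover have "D / 2 * (1 / (1 - x) + 1 / (1 + x)) = D / (1 - x\<^sup>2)"
    using x by (simp add: field_simps power2_eq_square)
  ultimately show "(\<Sum>i. u i * x ^ i) \<le> D / (1 - x\<^sup>2)"
    using suminf_le[OF upper summable] by (metis sums_summable sums_unique)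
qed

lemma P_inf_split:
  assumes "summable (\<lambda>i. real (u (i + K)) * x ^ i)"
  shows "P_inf u x = P_pref u K x + x ^ K * P_inf (\<lambda>i. u (i + K)) x"
proof -
  have shifted: "(\<lambda>i. real (u (i + K)) * x ^ (i + K)) = (\<lambda>i. x ^ K * (real (u (i + K)) * x ^ i))"
    by (simp add: power_add mult_ac)
  have "summable (\<lambda>i. real (u i) * x ^ i)"
    using summable_mult[OF assms, of "x ^ K"]
    by (subst summable_iff_shift[symmetric, of _ K]) (simp only: shifted)
  then have "P_inf u x = (\<Sum>i. real (u (i + K)) * x ^ (i + K)) + P_pref u K x"
    unfolding P_inf_def P_pref_def by (rule suminf_split_initial_segment)
  also have "(\<Sum>i. real (u (i + K)) * x ^ (i + K)) = x ^ K * P_inf (\<lambda>i. u (i + K)) x"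
    unfolding shifted P_inf_def by (rule suminf_mult[OF assms])
  finally show ?thesis
    by simp
qed

lemma INF_eq_plus_scaled:
  fixes F :: "'a \<Rightarrow> real"
  assumes c: "c > 0" and lower: "\<And>j. m + c * x \<le> F j"
    and approx: "\<And>\<delta>. \<delta> > 0 \<Longrightarrow> \<exists>j. F j \<le> m + \<delta>"
  shows "\<exists>t\<in>{x..0}. (INF j. F j) = m + c * t"
proof -
  have "m + c * x \<le> (INF j. F j)"
    using lower by (intro cINF_greatest) auto
  moreover have "(INF j. F j) \<le> m"
  proof (rule field_le_epsilon)
    fix \<delta> :: real assume "\<delta> > 0"
    then obtain j where "F j \<le> m + \<delta>"
      using approx by blast
    moreover have "(INF j. F j) \<le> F j"
      using lower by (intro cINF_lower bdd_belowI2) auto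
    ultimately show "(INF j. F j) \<le> m + \<delta>"
      by linarith
  qed
  ultimately show ?thesis
    using c by (intro bexI[of _ "((INF j. F j) - m) / c"]) (auto simp: field_simps)
qed

locale quadratic_beta =
  fixes a b :: nat and \<beta> \<beta>' :: real
  assumes b_le_a: "b \<le> a" and b_ge_2: "2 \<le> b" and b_dvd_a: "b dvd a"
    and beta_gt_1: "\<beta> > 1" and beta_square: "\<beta>\<^sup>2 = real a * \<beta> + real b"
    and beta_conj: "\<beta>' = real a - \<beta>"
begin

lemma beta_mult_self: "\<beta> * \<beta> = real a * \<beta> + real b"
  using beta_square by (simp add: power2_eq_square)

lemma beta_times_beta_minus_a: "\<beta> * (\<beta> - real a) = real b"
  using beta_mult_self by (simp add: algebra_simps)

lemma beta_gt_a: "real a < \<beta>"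
proof -
  have "0 < \<beta> * (\<beta> - real a)"
    using b_ge_2 by (simp add: beta_times_beta_minus_a)
  then show ?thesis
    using beta_gt_1 by (simp add: zero_less_mult_iff)
qed

lemma beta_lt_a_plus_1: "\<beta> < real a + 1"
proof -
  have "real b < \<beta>"
    using b_le_a beta_gt_a by linarith
  then have "\<beta> * (\<beta> - real a) < \<beta> * 1"
    by (simp add: beta_times_beta_minus_a)
  then show ?thesis
    using beta_gt_1 by simp
qed

lemma beta_conj_bounds: "-1 < \<beta>'" "\<beta>' < 0"
proof -
  have "\<beta>' = - (real b / \<beta>)"
    using beta_mult_self beta_gt_1 by (simp add: beta_conj field_simps)
  moreover have "0 < real b / \<beta>" and "real b / \<beta> < 1"
    using b_ge_2 b_le_a beta_gt_a beta_gt_1 by simp_all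
  ultimately show "-1 < \<beta>'" "\<beta>' < 0"
    by simp_all
qed

lemma int_combination_beta_eq_0:
  assumes "of_int p + of_int q * \<beta> = 0"
  shows "p = 0 \<and> q = 0"
proof (cases "q = 0")
  case True
  then show ?thesis
    using assms by simp
next
  case False
  \<comment> \<open>Otherwise beta = -p/q would be a rational root of the monic X^2 - a X - b, hence an integer.\<close>
  obtain p' q' g where pq: "p = p' * g" "q = q' * g" and "g \<noteq> 0" and "coprime p' q'"
    using gcd_coprime_exists[of p q] False by (metis gcd_eq_0_iff)
  have "of_int g * (of_int p' + of_int q' * \<beta>) = (0 :: real)"
    using assms by (simp add: pq algebra_simps)
  then have beta: "of_int q' * \<beta> = - of_int p'"
    using \<open>g \<noteq> 0\<close> by (simp add: eq_neg_iff_add_eq_0 add.commute)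
  have "of_int p' * of_int p' = (of_int q' * \<beta>) * (of_int q' * \<beta>)"
    unfolding beta by simp
  also have "\<dots> = of_int q' * of_int q' * (\<beta> * \<beta>)"
    by (simp add: algebra_simps)
  also have "\<dots> = of_int q' * (real a * (of_int q' * \<beta>) + of_int q' * real b)"
    unfolding beta_mult_self by (simp add: algebra_simps)
  also have "\<dots> = of_int q' * (of_int q' * real b - real a * of_int p')"
    unfolding beta by simp
  finally have "real_of_int (p' * p') = real_of_int (q' * (q' * int b - int a * p'))"
    by simp
  then have "q' dvd p' * p'"
    by (metis dvd_triv_left of_int_eq_iff)
  then have "q' dvd p'"
    using \<open>coprime p' q'\<close> by (simp add: coprime_commute coprime_dvd_mult_left_iff)
  then have "\<bar>q'\<bar> = 1"
    using \<open>coprime p' q'\<close> by (meson coprime_common_divisor_int dvd_refl)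
  then have "\<beta> = of_int (- q' * p')"
    using beta by (auto simp: abs_if split: if_splits)
  then show ?thesis
    using beta_gt_a beta_lt_a_plus_1 by (metis of_int_of_nat_eq of_int_1 of_int_add of_int_less_iff
        zless_imp_add1_zle not_le)
qed

definition beta_value :: "int \<times> int \<Rightarrow> real" where
  "beta_value x = of_int (fst x) + of_int (snd x) * \<beta>"

lemma beta_value_step:
  "beta_value x = of_int (fst x mod int b) + \<beta> * beta_value (beta_step (int a) (int b) x)"
proof -
  define k where "k = fst x div int b"
  have "\<beta> * beta_value (beta_step (int a) (int b) x)
          = of_int (snd x) * \<beta> - real a * of_int k * \<beta> + of_int k * (\<beta> * \<beta>)"
    by (simp add: beta_value_def beta_step_def algebra_simps flip: k_def)
  also have "\<dots> = of_int (snd x) * \<beta> + real b * of_int k"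
    unfolding beta_mult_self by (simp add: algebra_simps)
  moreover have "fst x = int b * k + fst x mod int b"
    by (simp add: k_def)
  then have "real_of_int (fst x) = real_of_int (int b * k + fst x mod int b)"
    by (rule arg_cong)
  then have "real_of_int (fst x) = real b * of_int k + of_int (fst x mod int b)"
    by simp
  ultimately show ?thesis
    by (simp add: beta_value_def)
qed

lemma beta_value_expand:
  "beta_value x = (\<Sum>i<n. of_int (beta_digit (int a) (int b) i x) * \<beta> ^ i)
                    + \<beta> ^ n * beta_value ((beta_step (int a) (int b) ^^ n) x)"
proof (induction n arbitrary: x)
  case (Suc n)
  let ?y = "beta_step (int a) (int b) x"
  have shift: "beta_digit (int a) (int b) (Suc i) x = beta_digit (int a) (int b) i ?y" for i
    unfolding beta_digit_def by (simp only: funpow_Suc_right comp_apply)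
  have "beta_value x = of_int (beta_digit (int a) (int b) 0 x) + \<beta> * beta_value ?y"
    using beta_value_step[of x] by (simp add: beta_digit_def)
  also have "\<dots> = of_int (beta_digit (int a) (int b) 0 x)
      + \<beta> * ((\<Sum>i<n. of_int (beta_digit (int a) (int b) i ?y) * \<beta> ^ i)
              + \<beta> ^ n * beta_value ((beta_step (int a) (int b) ^^ n) ?y))"
    by (simp only: Suc.IH[of ?y])
  also have "\<dots> = (\<Sum>i<Suc n. of_int (beta_digit (int a) (int b) i x) * \<beta> ^ i)
                    + \<beta> ^ Suc n * beta_value ((beta_step (int a) (int b) ^^ Suc n) x)"
    unfolding sum.lessThan_Suc_shift shift funpow_Suc_right comp_apply
    by (simp add: sum_distrib_left algebra_simps)
  finally show ?case .
qed simp

lemma Zbeta_iff: "z \<in> Zbeta \<beta> \<longleftrightarrow> (\<exists>p q. z = of_int p + of_int q * \<beta>)"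
proof
  have power: "\<exists>p q. \<beta> ^ i = of_int p + of_int q * \<beta>" for i
  proof (induction i)
    case 0
    show ?case
      by (intro exI[of _ 1] exI[of _ 0]) simp
  next
    case (Suc i)
    then obtain p q where "\<beta> ^ i = of_int p + of_int q * \<beta>"
      by blast
    then have "\<beta> ^ Suc i = of_int p * \<beta> + of_int q * (\<beta> * \<beta>)"
      by (simp add: algebra_simps)
    also have "\<dots> = of_int (q * int b) + of_int (p + q * int a) * \<beta>"
      unfolding beta_mult_self by (simp add: algebra_simps)
    finally have "\<beta> ^ Suc i = of_int (q * int b) + of_int (p + q * int a) * \<beta>" .
    then show ?case
      by blast
  qed
  assume "z \<in> Zbeta \<beta>"
  then obtain c k where z: "z = (\<Sum>i<k. of_int (c i) * \<beta> ^ i)"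
    unfolding Zbeta_def by blast
  have "\<exists>p q. (\<Sum>i<k. of_int (c i) * \<beta> ^ i) = of_int p + of_int q * \<beta>"
  proof (induction k)
    case (Suc k)
    then obtain p q where "(\<Sum>i<k. of_int (c i) * \<beta> ^ i) = of_int p + of_int q * \<beta>"
      by blast
    moreover obtain p' q' where "\<beta> ^ k = of_int p' + of_int q' * \<beta>"
      using power by blast
    ultimately have "(\<Sum>i<Suc k. of_int (c i) * \<beta> ^ i) = of_int (p + c k * p') + of_int (q + c k * q') * \<beta>"
      by (simp add: algebra_simps)
    then show ?case
      by blast
  qed (intro exI[of _ 0], simp)
  then show "\<exists>p q. z = of_int p + of_int q * \<beta>"
    using z by simp
next
  assume "\<exists>p q. z = of_int p + of_int q * \<beta>"
  then obtain p q where "z = of_int p + of_int q * \<beta>"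
    by blast
  then have "z = (\<Sum>i<2. of_int (if i = 0 then p else q) * \<beta> ^ i)"
    by (simp add: numeral_2_eq_2)
  then show "z \<in> Zbeta \<beta>"
    unfolding Zbeta_def by auto
qed

lemma int_eq_beta_times_Zbeta_dvd:
  assumes "z \<in> Zbeta \<beta>" and "of_int m = \<beta> * z"
  shows "int b dvd m"
proof -
  obtain p q where "z = of_int p + of_int q * \<beta>"
    using assms(1) Zbeta_iff by blast
  then have "\<beta> * z = of_int p * \<beta> + of_int q * (\<beta> * \<beta>)"
    by (simp add: algebra_simps)
  also have "\<dots> = of_int (q * int b) + of_int (p + q * int a) * \<beta>"
    unfolding beta_mult_self by (simp add: algebra_simps)
  finally have "\<beta> * z = of_int (q * int b) + of_int (p + q * int a) * \<beta>" .
  then have "of_int (q * int b - m) + of_int (p + q * int a) * \<beta> = 0"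
    using assms(2) by simp
  then have "m = q * int b"
    using int_combination_beta_eq_0 by fastforce
  then show ?thesis
    by simp
qed

lemma beta_expansion_digits_unique:
  assumes "\<forall>n. u n < b" "\<forall>n. \<exists>z\<in>Zbeta \<beta>. x - (\<Sum>i<n. real (u i) * \<beta> ^ i) = \<beta> ^ n * z"
    and "\<forall>n. v n < b" "\<forall>n. \<exists>z\<in>Zbeta \<beta>. x - (\<Sum>i<n. real (v i) * \<beta> ^ i) = \<beta> ^ n * z"
  shows "u = v"
proof
  fix n
  show "u n = v n"
  proof (induction n rule: less_induct)
    case (less n)
    then have same_prefix: "(\<Sum>i<n. real (u i) * \<beta> ^ i) = (\<Sum>i<n. real (v i) * \<beta> ^ i)"
      by simp
    obtain z1 z2 where "z1 \<in> Zbeta \<beta>" "x - (\<Sum>i<Suc n. real (u i) * \<beta> ^ i) = \<beta> ^ Suc n * z1"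
      and "z2 \<in> Zbeta \<beta>" "x - (\<Sum>i<Suc n. real (v i) * \<beta> ^ i) = \<beta> ^ Suc n * z2"
      using assms(2,4) by blast
    then have "\<beta> ^ n * (real (v n) - real (u n)) = \<beta> ^ n * (\<beta> * (z1 - z2))"
      using same_prefix by (simp add: algebra_simps)
    then have "of_int (int (v n) - int (u n)) = \<beta> * (z1 - z2)"
      using beta_gt_1 by simp
    moreover have "z1 - z2 \<in> Zbeta \<beta>"
    proof -
      obtain p1 q1 p2 q2 where "z1 = of_int p1 + of_int q1 * \<beta>" and "z2 = of_int p2 + of_int q2 * \<beta>"
        using \<open>z1 \<in> Zbeta \<beta>\<close> \<open>z2 \<in> Zbeta \<beta>\<close> Zbeta_iff by blast
      then have "z1 - z2 = of_int (p1 - p2) + of_int (q1 - q2) * \<beta>"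
        by (simp add: algebra_simps)
      then show ?thesis
        unfolding Zbeta_iff by blast
    qed
    ultimately have dvd: "int b dvd int (v n) - int (u n)"
      by (rule int_eq_beta_times_Zbeta_dvd[rotated])
    have bound: "\<bar>int (v n) - int (u n)\<bar> < int b"
      using assms(1,3)[rule_format, of n] by (simp add: abs_less_iff)
    have "int (v n) - int (u n) = 0"
    proof (rule ccontr)
      assume "int (v n) - int (u n) \<noteq> 0"
      with dvd have "\<bar>int b\<bar> \<le> \<bar>int (v n) - int (u n)\<bar>"
        by (rule dvd_imp_le_int[rotated])
      with bound show False
        by simp
    qed
    then show ?case
      by simp
  qed
qed

lemma int_a_eq: "int a = int b * int (a div b)"
  using b_dvd_a by (simp flip: of_nat_mult)

definition beta_digits :: "int \<Rightarrow> nat \<Rightarrow> nat" where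
  "beta_digits j i = nat (beta_digit (int a) (int b) i (j, 0))"

lemma beta_digit_bounds: "0 \<le> beta_digit (int a) (int b) i x" "beta_digit (int a) (int b) i x < int b"
  using b_ge_2 by (simp_all add: beta_digit_def)

lemma of_nat_beta_digits: "real (beta_digits j i) = of_int (beta_digit (int a) (int b) i (j, 0))"
  using beta_digit_bounds by (simp add: beta_digits_def)

lemma beta_digits_less: "beta_digits j i < b"
  using beta_digit_bounds[of i "(j, 0)"] by (simp add: beta_digits_def nat_less_iff)

lemma beta_expansion_of_int: "beta_expansion \<beta> b (of_int j) = beta_digits j"
proof -
  have remainder: "\<exists>z\<in>Zbeta \<beta>. of_int j - (\<Sum>i<n. real (beta_digits j i) * \<beta> ^ i) = \<beta> ^ n * z" for n
  proof
    show "beta_value ((beta_step (int a) (int b) ^^ n) (j, 0)) \<in> Zbeta \<beta>"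
      unfolding Zbeta_iff beta_value_def by blast
    show "of_int j - (\<Sum>i<n. real (beta_digits j i) * \<beta> ^ i)
            = \<beta> ^ n * beta_value ((beta_step (int a) (int b) ^^ n) (j, 0))"
      using beta_value_expand[of "(j, 0)" n] by (simp add: of_nat_beta_digits beta_value_def)
  qed
  show ?thesis
    unfolding beta_expansion_def
    by (rule the_equality) (use beta_digits_less remainder beta_expansion_digits_unique in blast)+
qed

lemma beta_digits_mod_power:
  assumes "i < 2 * n"
  shows "beta_digits j i = beta_digits (j mod int b ^ n) i"
  using beta_digit_mod_power[OF _ int_a_eq assms] b_ge_2 by (simp add: beta_digits_def)

lemma exists_beta_digits_prefix_even_zeros:
  "\<exists>j. (\<forall>i < 2 * n. beta_digits j i = beta_digits r i) \<and>
        (\<forall>i. 2 * n \<le> i \<and> i < 2 * n + 2 * N \<and> even i \<longrightarrow> beta_digits j i = 0)"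
proof -
  obtain j where "\<forall>i < 2 * n. beta_digit (int a) (int b) i (j, 0) = beta_digit (int a) (int b) i (r, 0)"
    and "\<forall>i. 2 * n \<le> i \<and> i < 2 * n + 2 * N \<and> even i \<longrightarrow> beta_digit (int a) (int b) i (j, 0) = 0"
    using exists_beta_digit_prefix_even_zeros[OF _ int_a_eq, of n r N] b_ge_2 by auto
  then show ?thesis
    by (intro exI[of _ j]) (simp add: beta_digits_def)
qed

lemma beta_digits_le: "real (beta_digits j i) \<le> real b - 1"
proof -
  have "real (beta_digits j i + 1) \<le> real b"
    using beta_digits_less[of j i] by (simp only: of_nat_le_iff Suc_eq_plus1[symmetric] Suc_le_eq)
  then show ?thesis
    by simp
qed

lemma summable_beta_digits: "summable (\<lambda>i. real (beta_digits j (i + K)) * \<beta>' ^ i)"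
  and beta_digits_tail_bounds:
    "(real b - 1) * \<beta>' / (1 - \<beta>'\<^sup>2) \<le> P_inf (\<lambda>i. beta_digits j (i + K)) \<beta>'"
    "P_inf (\<lambda>i. beta_digits j (i + K)) \<beta>' \<le> (real b - 1) / (1 - \<beta>'\<^sup>2)"
  using alternating_power_series_bounds[OF beta_conj_bounds,
      where u = "\<lambda>i. real (beta_digits j (i + K))" and D = "real b - 1", OF of_nat_0_le_iff beta_digits_le]
  unfolding P_inf_def by blast+

lemma P_inf_beta_digits_split:
  "P_inf (beta_digits j) \<beta>' = P_pref (beta_digits j) K \<beta>' + \<beta>' ^ K * P_inf (\<lambda>i. beta_digits j (i + K)) \<beta>'"
  by (rule P_inf_split[OF summable_beta_digits])

lemma tail_scale_pos: "0 < \<beta>' ^ (2 * n) * ((real b - 1) / (1 - \<beta>'\<^sup>2))"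
  using beta_conj_bounds b_ge_2 by (simp add: abs_square_less_1 power_mult)

lemma P_inf_beta_digits_lower:
  "P_pref (beta_digits j) (2 * n) \<beta>' + \<beta>' ^ (2 * n) * ((real b - 1) / (1 - \<beta>'\<^sup>2)) * \<beta>'
     \<le> P_inf (beta_digits j) \<beta>'"
proof -
  have "(real b - 1) / (1 - \<beta>'\<^sup>2) * \<beta>' \<le> P_inf (\<lambda>i. beta_digits j (i + 2 * n)) \<beta>'"
    using beta_digits_tail_bounds(1) by simp
  then have "\<beta>' ^ (2 * n) * ((real b - 1) / (1 - \<beta>'\<^sup>2) * \<beta>')
               \<le> \<beta>' ^ (2 * n) * P_inf (\<lambda>i. beta_digits j (i + 2 * n)) \<beta>'"
    by (rule mult_left_mono) simp
  then show ?thesis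
    using P_inf_beta_digits_split[of j "2 * n"] by (simp add: mult.assoc)
qed

lemma P_inf_beta_digits_upper:
  assumes zeros: "\<forall>i. 2 * n \<le> i \<and> i < 2 * n + 2 * N \<and> even i \<longrightarrow> beta_digits j i = 0"
  shows "P_inf (beta_digits j) \<beta>' \<le> P_pref (beta_digits j) (2 * n) \<beta>' + (\<beta>'\<^sup>2) ^ N * ((real b - 1) / (1 - \<beta>'\<^sup>2))"
proof -
  define K where "K = 2 * n + 2 * N"
  have "P_pref (beta_digits j) K \<beta>'
          = P_pref (beta_digits j) (2 * n) \<beta>' + (\<Sum>i = 2 * n..<K. real (beta_digits j i) * \<beta>' ^ i)"
    unfolding P_pref_def lessThan_atLeast0 K_def
    by (subst sum.atLeastLessThan_concat[symmetric, of 0 "2 * n"]) auto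
  moreover have "(\<Sum>i = 2 * n..<K. real (beta_digits j i) * \<beta>' ^ i) \<le> 0"
  proof (rule sum_nonpos)
    fix i assume i: "i \<in> {2 * n..<K}"
    show "real (beta_digits j i) * \<beta>' ^ i \<le> 0"
    proof (cases "even i")
      case True
      then show ?thesis
        using zeros i by (simp add: K_def)
    next
      case False
      then have "\<beta>' ^ i \<le> 0"
        using beta_conj_bounds by (simp add: power_less_zero_eq less_imp_le)
      then show ?thesis
        by (simp add: mult_nonneg_nonpos)
    qed
  qed
  moreover have "\<beta>' ^ K * P_inf (\<lambda>i. beta_digits j (i + K)) \<beta>'
                   \<le> (\<beta>'\<^sup>2) ^ N * ((real b - 1) / (1 - \<beta>'\<^sup>2))"
  proof -
    have sq: "0 \<le> \<beta>'\<^sup>2" "\<beta>'\<^sup>2 \<le> 1"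
      using beta_conj_bounds by (simp_all add: abs_square_le_1)
    have power_K: "\<beta>' ^ K = (\<beta>'\<^sup>2) ^ n * (\<beta>'\<^sup>2) ^ N"
      by (simp add: K_def power_add power_mult)
    have "0 \<le> (real b - 1) / (1 - \<beta>'\<^sup>2)"
      using beta_conj_bounds b_ge_2 by (simp add: abs_square_less_1 less_imp_le)
    moreover have "\<beta>' ^ K \<le> (\<beta>'\<^sup>2) ^ N"
      unfolding power_K using sq by (intro mult_left_le_one_le) (simp_all add: power_le_one)
    moreover have "\<beta>' ^ K * P_inf (\<lambda>i. beta_digits j (i + K)) \<beta>'
                     \<le> \<beta>' ^ K * ((real b - 1) / (1 - \<beta>'\<^sup>2))"
      using beta_digits_tail_bounds(2) sq unfolding power_K by (intro mult_left_mono) simp_all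
    ultimately show ?thesis
      using mult_right_mono[of "\<beta>' ^ K" "(\<beta>'\<^sup>2) ^ N" "(real b - 1) / (1 - \<beta>'\<^sup>2)"] by linarith
  qed
  ultimately show ?thesis
    using P_inf_beta_digits_split[of j K] by linarith
qed

definition min_prefix_value :: "nat \<Rightarrow> real" where
  "min_prefix_value n = Min ((\<lambda>j. P_pref (beta_digits (int j)) (2 * n) \<beta>') ` {0..<b ^ n})"

lemma min_prefix_value_le: "min_prefix_value n \<le> P_pref (beta_digits j) (2 * n) \<beta>'"
proof -
  define r where "r = nat (j mod int b ^ n)"
  have r: "int r = j mod int b ^ n" "r \<in> {0..<b ^ n}"
    using b_ge_2 by (simp_all add: r_def nat_less_iff)
  have "P_pref (beta_digits j) (2 * n) \<beta>' = P_pref (beta_digits (int r)) (2 * n) \<beta>'"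
    unfolding P_pref_def r(1) by (intro sum.cong refl) (simp add: beta_digits_mod_power[of _ n j])
  then show ?thesis
    unfolding min_prefix_value_def using r(2) by (simp add: Min_le)
qed

lemma min_prefix_value_attained: "\<exists>r. P_pref (beta_digits r) (2 * n) \<beta>' = min_prefix_value n"
proof -
  have "min_prefix_value n \<in> (\<lambda>j. P_pref (beta_digits (int j)) (2 * n) \<beta>') ` {0..<b ^ n}"
    unfolding min_prefix_value_def using b_ge_2 by (intro Min_in) auto
  then show ?thesis
    by auto
qed

lemma P_inf_ge_min_prefix_value:
  "min_prefix_value n + \<beta>' ^ (2 * n) * ((real b - 1) / (1 - \<beta>'\<^sup>2)) * \<beta>' \<le> P_inf (beta_digits j) \<beta>'"
  using min_prefix_value_le[of n j] P_inf_beta_digits_lower[of j n] by linarith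

lemma P_inf_approaches_min_prefix_value:
  assumes "\<delta> > 0"
  shows "\<exists>j. P_inf (beta_digits j) \<beta>' \<le> min_prefix_value n + \<delta>"
proof -
  define D where "D = (real b - 1) / (1 - \<beta>'\<^sup>2)"
  have "D > 0"
    using beta_conj_bounds b_ge_2 by (simp add: D_def abs_square_less_1)
  then obtain N where "(\<beta>'\<^sup>2) ^ N < \<delta> / D"
    using real_arch_pow_inv[of "\<delta> / D" "\<beta>'\<^sup>2"] assms beta_conj_bounds by (auto simp: abs_square_less_1)
  then have small: "(\<beta>'\<^sup>2) ^ N * D < \<delta>"
    using \<open>D > 0\<close> by (simp add: pos_less_divide_eq)
  obtain r where r: "P_pref (beta_digits r) (2 * n) \<beta>' = min_prefix_value n"
    using min_prefix_value_attained by blast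
  obtain j where prefix: "\<forall>i < 2 * n. beta_digits j i = beta_digits r i"
    and zeros: "\<forall>i. 2 * n \<le> i \<and> i < 2 * n + 2 * N \<and> even i \<longrightarrow> beta_digits j i = 0"
    using exists_beta_digits_prefix_even_zeros by blast
  have "P_pref (beta_digits j) (2 * n) \<beta>' = min_prefix_value n"
    unfolding r[symmetric] P_pref_def using prefix by (intro sum.cong) auto
  then show ?thesis
    using P_inf_beta_digits_upper[OF zeros] small by (intro exI[of _ j]) (simp add: D_def)
qed

end

theorem proposition6:
  fixes a b :: nat and \<beta> \<beta>' :: real and n :: nat
  assumes "a \<ge> b" and "b \<ge> 2" and "b dvd a"
    and "\<beta> > 1" and "\<beta>\<^sup>2 = real a * \<beta> + real b"
    and "\<beta>' = real a - \<beta>"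
  shows "\<exists>t\<in>{\<beta>'..0}.
    (INF j::int. P_inf (beta_expansion \<beta> b (of_int j)) \<beta>') =
      Min ((\<lambda>j. P_pref (beta_expansion \<beta> b (real j)) (2 * n) \<beta>') ` {0..<b ^ n})
      + \<beta>' ^ (2 * n) * ((real b - 1) / (1 - \<beta>'\<^sup>2)) * t"
proof -
  interpret quadratic_beta a b \<beta> \<beta>'
    using assms by unfold_locales
  have nat_expansion: "(\<lambda>j. P_pref (beta_expansion \<beta> b (real j)) (2 * n) \<beta>')
                         = (\<lambda>j. P_pref (beta_digits (int j)) (2 * n) \<beta>')"
    using beta_expansion_of_int by (metis of_int_of_nat_eq)
  have int_expansion: "(\<lambda>j. P_inf (beta_expansion \<beta> b (of_int j)) \<beta>') = (\<lambda>j. P_inf (beta_digits j) \<beta>')"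
    by (simp add: beta_expansion_of_int)
  obtain t where "t \<in> {\<beta>'..0}"
    and "(INF j. P_inf (beta_digits j) \<beta>') = min_prefix_value n + \<beta>' ^ (2 * n) * ((real b - 1) / (1 - \<beta>'\<^sup>2)) * t"
    using INF_eq_plus_scaled[OF tail_scale_pos[of n] P_inf_ge_min_prefix_value[of n]
        P_inf_approaches_min_prefix_value[of _ n]] by blast
  then show ?thesis
    unfolding int_expansion nat_expansion min_prefix_value_def by blast
qed

end
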